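(* Let $K$ be a field, $S=K[[x_1,\dots,x_n]]$, $E$ the $S$-module described in the context, and fix a term order $\prec$ on $E$. Let $N\subset E$ be an $S$-submodule of finite length. Let $N_0=T_1(N)$, and inductively, as long as $N_{i-1}\neq N$, choose $\xi_i\in N$ with $$\mathrm{LT}_\prec(\xi_i)=\min_\prec\{\mathrm{LT}_\prec(\eta)\mid \eta\in N,\ \mathrm{LT}_\prec(\eta)\notin\mathrm{LT}_\prec(N_{i-1})\},$$ and set $N_i=N_{i-1}+S\xi_i$. Then this yields a finite chain of $S$-modules $T_1(N)=N_0\subset N_1\subset\cdots\subset N_k=N$, and: (1) $N_i/N_{i-1}\cong K$ for all $1\le i\le k$; (2) $\mathrm{LT}_\prec(\xi_1)\prec\mathrm{LT}_\prec(\xi_2)\prec\cdots\prec\mathrm{LT}_\prec(\xi_k)$; (3) each $N_i$ does not depend on the choice of $\xi_i$; (4) $\xi_i$ can be chosen so that no term occurring in $\xi_i$ lies in $\mathrm{LT}_\prec(N_{i-1})$, and such a $\xi_i$ is unique up to multiplication by an element of $K^\times$.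
   Context: $E=K[x_1^{-1},\dots,x_n^{-1}]\cdot\frac{1}{x_1\cdots x_n}$ is the $K$-vector space with basis the terms $\frac{1}{x^{\alpha+1}}=\frac{1}{x_1^{\alpha_1+1}\cdots x_n^{\alpha_n+1}}$, $\alpha\in\mathbb{Z}^n_{\ge0}$, with $S$-module structure $x^{\gamma}\cdot\frac{1}{x^{\beta+1}}=\frac{1}{x^{\beta-\gamma+1}}$ if $\beta-\gamma\in\mathbb{Z}^n_{\ge0}$ and $0$ otherwise, extended bilinearly. A term order on $E$ is a total order $\prec$ on terms such that $\frac{1}{x_1\cdots x_n}\preceq\frac{1}{x^{\alpha+1}}$ for all $\alpha$, and $\frac{1}{x^{\alpha+1}}\prec\frac{1}{x^{\beta+1}}$ implies $\frac{1}{x^{\alpha+\gamma+1}}\prec\frac{1}{x^{\beta+\gamma+1}}$ for all $\alpha,\beta,\gamma$ (such an order is a well-ordering). For $0\neq\eta\in E$, $\mathrm{LT}_\prec(\eta)$ is the $\prec$-largest term occurring in $\eta$ with nonzero coefficient; for a subset $N\subset E$, $\mathrm{LT}_\prec(N)=\{\mathrm{LT}_\prec(\eta)\mid 0\ne\eta\in N\}$. For an $S$-submodule $N\subset E$, $T_1(N)$ denotes the $S$-submodule of $N$ generated by all terms of $E$ that lie in $N$. *)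

theory Defs
  imports Main
begin

(* Variables x_1..x_n are indexed by a finite type 'v (n = CARD('v)).
   An element of E is a coefficient function eta : ('v => nat) => 'k with finite support;
   eta alpha is the coefficient of the term 1/x^(alpha+1).
   An element of S = K[[x_1..x_n]] is an arbitrary coefficient function s : ('v => nat) => 'k;
   s gamma is the coefficient of x^gamma. *)

definition is_E :: "(('v \<Rightarrow> nat) \<Rightarrow> 'k::field) \<Rightarrow> bool" where
  "is_E \<eta> \<longleftrightarrow> finite {\<alpha>. \<eta> \<alpha> \<noteq> 0}"

(* S-action: x^gamma * 1/x^(beta+gamma+1) = 1/x^(beta+1), extended bilinearly;
   the sum is finite since eta has finite support. *)
definition smult_E :: "(('v \<Rightarrow> nat) \<Rightarrow> 'k::field) \<Rightarrow> (('v \<Rightarrow> nat) \<Rightarrow> 'k) \<Rightarrow> (('v \<Rightarrow> nat) \<Rightarrow> 'k)" where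
  "smult_E s \<eta> = (\<lambda>\<beta>. \<Sum>\<gamma>\<in>{\<gamma>. \<eta> (\<lambda>v. \<beta> v + \<gamma> v) \<noteq> 0}. s \<gamma> * \<eta> (\<lambda>v. \<beta> v + \<gamma> v))"

definition submodule :: "(('v \<Rightarrow> nat) \<Rightarrow> 'k::field) set \<Rightarrow> bool" where
  "submodule M \<longleftrightarrow> M \<subseteq> Collect is_E \<and> (\<lambda>_. 0) \<in> M
     \<and> (\<forall>a\<in>M. \<forall>b\<in>M. (\<lambda>\<alpha>. a \<alpha> + b \<alpha>) \<in> M)
     \<and> (\<forall>s. \<forall>a\<in>M. smult_E s a \<in> M)"

definition finite_length :: "(('v \<Rightarrow> nat) \<Rightarrow> 'k::field) set \<Rightarrow> bool" where
  "finite_length N \<longleftrightarrow> (\<exists>m::nat. \<forall>(c::nat \<Rightarrow> (('v \<Rightarrow> nat) \<Rightarrow> 'k) set) k.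
     (\<forall>i\<le>k. submodule (c i) \<and> c i \<subseteq> N) \<and> (\<forall>i<k. c i \<subset> c (Suc i)) \<longrightarrow> k \<le> m)"

definition term_order :: "(('v \<Rightarrow> nat) \<Rightarrow> ('v \<Rightarrow> nat) \<Rightarrow> bool) \<Rightarrow> bool" where
  "term_order ord \<longleftrightarrow>
     (\<forall>a. \<not> ord a a) \<and> (\<forall>a b c. ord a b \<and> ord b c \<longrightarrow> ord a c)
     \<and> (\<forall>a b. a \<noteq> b \<longrightarrow> ord a b \<or> ord b a)
     \<and> (\<forall>a. a \<noteq> (\<lambda>_. 0) \<longrightarrow> ord (\<lambda>_. 0) a)
     \<and> (\<forall>a b g. ord a b \<longrightarrow> ord (\<lambda>v. a v + g v) (\<lambda>v. b v + g v))"

definition le_ord :: "(('v \<Rightarrow> nat) \<Rightarrow> ('v \<Rightarrow> nat) \<Rightarrow> bool) \<Rightarrow> ('v \<Rightarrow> nat) \<Rightarrow> ('v \<Rightarrow> nat) \<Rightarrow> bool" where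
  "le_ord ord a b \<longleftrightarrow> a = b \<or> ord a b"

definition LT :: "(('v \<Rightarrow> nat) \<Rightarrow> ('v \<Rightarrow> nat) \<Rightarrow> bool) \<Rightarrow> (('v \<Rightarrow> nat) \<Rightarrow> 'k::field) \<Rightarrow> ('v \<Rightarrow> nat)" where
  "LT ord \<eta> = (THE \<alpha>. \<eta> \<alpha> \<noteq> 0 \<and> (\<forall>\<beta>. \<eta> \<beta> \<noteq> 0 \<longrightarrow> le_ord ord \<beta> \<alpha>))"

definition LTs :: "(('v \<Rightarrow> nat) \<Rightarrow> ('v \<Rightarrow> nat) \<Rightarrow> bool) \<Rightarrow> (('v \<Rightarrow> nat) \<Rightarrow> 'k::field) set \<Rightarrow> ('v \<Rightarrow> nat) set" where
  "LTs ord M = {LT ord \<eta> | \<eta>. \<eta> \<in> M \<and> \<eta> \<noteq> (\<lambda>_. 0)}"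

definition term_E :: "('v \<Rightarrow> nat) \<Rightarrow> (('v \<Rightarrow> nat) \<Rightarrow> 'k::field)" where
  "term_E \<alpha> = (\<lambda>\<beta>. if \<beta> = \<alpha> then 1 else 0)"

definition gen_sub :: "(('v \<Rightarrow> nat) \<Rightarrow> 'k::field) set \<Rightarrow> (('v \<Rightarrow> nat) \<Rightarrow> 'k) set" where
  "gen_sub A = \<Inter>{M. submodule M \<and> A \<subseteq> M}"

definition T1 :: "(('v \<Rightarrow> nat) \<Rightarrow> 'k::field) set \<Rightarrow> (('v \<Rightarrow> nat) \<Rightarrow> 'k) set" where
  "T1 N = gen_sub {\<eta> \<in> N. \<exists>\<alpha>. \<eta> = term_E \<alpha>}"

definition cyclic :: "(('v \<Rightarrow> nat) \<Rightarrow> 'k::field) \<Rightarrow> (('v \<Rightarrow> nat) \<Rightarrow> 'k) set" where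
  "cyclic \<xi> = {smult_E s \<xi> | s. True}"

definition sum_sub :: "(('v \<Rightarrow> nat) \<Rightarrow> 'k::field) set \<Rightarrow> (('v \<Rightarrow> nat) \<Rightarrow> 'k) set \<Rightarrow> (('v \<Rightarrow> nat) \<Rightarrow> 'k) set" where
  "sum_sub A B = {(\<lambda>\<alpha>. a \<alpha> + b \<alpha>) | a b. a \<in> A \<and> b \<in> B}"

fun Nseq :: "(('v \<Rightarrow> nat) \<Rightarrow> 'k::field) set \<Rightarrow> (nat \<Rightarrow> (('v \<Rightarrow> nat) \<Rightarrow> 'k)) \<Rightarrow> nat \<Rightarrow> (('v \<Rightarrow> nat) \<Rightarrow> 'k) set" where
  "Nseq N \<xi> 0 = T1 N"
| "Nseq N \<xi> (Suc i) = sum_sub (Nseq N \<xi> i) (cyclic (\<xi> (Suc i)))"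

definition valid_step :: "(('v \<Rightarrow> nat) \<Rightarrow> ('v \<Rightarrow> nat) \<Rightarrow> bool) \<Rightarrow> (('v \<Rightarrow> nat) \<Rightarrow> 'k::field) set
     \<Rightarrow> (('v \<Rightarrow> nat) \<Rightarrow> 'k) set \<Rightarrow> (('v \<Rightarrow> nat) \<Rightarrow> 'k) \<Rightarrow> bool" where
  "valid_step ord N M \<zeta> \<longleftrightarrow> \<zeta> \<in> N \<and> \<zeta> \<noteq> (\<lambda>_. 0) \<and> LT ord \<zeta> \<notin> LTs ord M
     \<and> (\<forall>\<eta>\<in>N. \<eta> \<noteq> (\<lambda>_. 0) \<and> LT ord \<eta> \<notin> LTs ord M \<longrightarrow> le_ord ord (LT ord \<zeta>) (LT ord \<eta>))"

definition valid_run :: "(('v \<Rightarrow> nat) \<Rightarrow> ('v \<Rightarrow> nat) \<Rightarrow> bool) \<Rightarrow> (('v \<Rightarrow> nat) \<Rightarrow> 'k::field) set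
     \<Rightarrow> (nat \<Rightarrow> (('v \<Rightarrow> nat) \<Rightarrow> 'k)) \<Rightarrow> bool" where
  "valid_run ord N \<xi> \<longleftrightarrow> (\<forall>i. Nseq N \<xi> i \<noteq> N \<longrightarrow> valid_step ord N (Nseq N \<xi> i) (\<xi> (Suc i)))"

(* M' / M \<cong> K as S-modules (K = S/m, S acting through the constant coefficient):
   an S-linear surjection M' \<rightarrow> K with kernel M *)
definition quot_iso_K :: "(('v \<Rightarrow> nat) \<Rightarrow> 'k::field) set \<Rightarrow> (('v \<Rightarrow> nat) \<Rightarrow> 'k) set \<Rightarrow> bool" where
  "quot_iso_K M M' \<longleftrightarrow> (\<exists>\<phi> :: (('v \<Rightarrow> nat) \<Rightarrow> 'k) \<Rightarrow> 'k.
      (\<forall>a\<in>M'. \<forall>b\<in>M'. \<phi> (\<lambda>\<alpha>. a \<alpha> + b \<alpha>) = \<phi> a + \<phi> b)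
    \<and> (\<forall>s. \<forall>a\<in>M'. \<phi> (smult_E s a) = s (\<lambda>_. 0) * \<phi> a)
    \<and> \<phi> ` M' = UNIV
    \<and> {a\<in>M'. \<phi> a = 0} = M)"

end

(*
  Since N has finite length, its elements involve only finitely many terms, so sets of leading
  terms are finite and reduction by leading terms terminates. If \<xi> is an admissible choice over
  M, every element of N whose leading term is below LT(\<xi>) reduces to zero by elements of M, so
  it lies in M. Multiplying \<xi> by a monomial x^\<gamma>, \<gamma> \<noteq> 0, lowers its leading term, hence
  M + S\<xi> = M + K\<xi> and the quotient is K, the action being through the constant coefficient.
  Two admissible choices have the same leading term and differ, after scaling, by an element
  below it, which gives independence of the choice and, for reduced choices (no term in LT(M)),
  uniqueness up to a scalar. The leading terms increase since LT(\<xi>\<^sub>i) already lies in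
  LT(N\<^sub>j\<^sub>-\<^sub>1) for i < j, and the chain stops because N has finite length.
*)

theory Submission
  imports Defs
begin

section \<open>Term orders and leading terms\<close>

lemma finite_has_greatest_wrt:
  assumes trans: "\<And>a b c. R a b \<Longrightarrow> R b c \<Longrightarrow> R a c"
    and total: "\<And>a b. a \<noteq> b \<Longrightarrow> R a b \<or> R b a"
    and "finite F" "F \<noteq> {}"
  shows "\<exists>a\<in>F. \<forall>b\<in>F. b = a \<or> R b a"
  using assms(3,4)
proof (induction F rule: finite_ne_induct)
  case (insert x F)
  then obtain a where a: "a \<in> F" "\<forall>b\<in>F. b = a \<or> R b a" by blast
  show ?case
  proof (cases "R a x")
    case True
    then have "\<forall>b\<in>insert x F. b = x \<or> R b x" using a trans[OF _ True] by auto
    then show ?thesis by blast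
  next
    case False
    then have "x = a \<or> R x a" using total by blast
    then show ?thesis using a by blast
  qed
qed simp

lemma is_E_add_scale: "is_E a \<Longrightarrow> is_E b \<Longrightarrow> is_E (\<lambda>\<alpha>. a \<alpha> + c * b \<alpha>)"
  unfolding is_E_def by (rule finite_subset[of _ "{\<alpha>. a \<alpha> \<noteq> 0} \<union> {\<alpha>. b \<alpha> \<noteq> 0}"]) auto

locale term_ord =
  fixes ord :: "('v \<Rightarrow> nat) \<Rightarrow> ('v \<Rightarrow> nat) \<Rightarrow> bool"
  assumes term_order: "term_order ord"
begin

lemma ord_irrefl: "\<not> ord a a"
  using term_order unfolding term_order_def by blast

lemma ord_trans: "ord a b \<Longrightarrow> ord b c \<Longrightarrow> ord a c"
  using term_order unfolding term_order_def by blast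

lemma ord_total: "a \<noteq> b \<Longrightarrow> ord a b \<or> ord b a"
  using term_order unfolding term_order_def by blast

lemma ord_zero_less: "a \<noteq> (\<lambda>_. 0) \<Longrightarrow> ord (\<lambda>_. 0) a"
  using term_order unfolding term_order_def by blast

lemma ord_add_right: "ord a b \<Longrightarrow> ord (\<lambda>v. a v + g v) (\<lambda>v. b v + g v)"
  using term_order unfolding term_order_def by blast

lemma ord_less_add:
  assumes "\<gamma> \<noteq> (\<lambda>_. 0)"
  shows "ord a (\<lambda>v. a v + \<gamma> v)"
proof -
  have "ord (\<lambda>v. 0 + a v) (\<lambda>v. \<gamma> v + a v)"
    using ord_add_right[of "\<lambda>_. 0" \<gamma> a] ord_zero_less[OF assms] by simp
  moreover have "(\<lambda>v. \<gamma> v + a v) = (\<lambda>v. a v + \<gamma> v)" by (rule ext) (rule add.commute)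
  ultimately show ?thesis by simp
qed

lemma le_ord_iff_not_less: "le_ord ord a b \<longleftrightarrow> \<not> ord b a"
  unfolding le_ord_def using ord_trans ord_irrefl ord_total by blast

lemma le_ord_antisym: "le_ord ord a b \<Longrightarrow> le_ord ord b a \<Longrightarrow> a = b"
  unfolding le_ord_def using ord_trans ord_irrefl by blast

lemma le_ord_trans: "le_ord ord a b \<Longrightarrow> le_ord ord b c \<Longrightarrow> le_ord ord a c"
  unfolding le_ord_def using ord_trans by blast

lemma less_le_ord_trans: "ord a b \<Longrightarrow> le_ord ord b c \<Longrightarrow> ord a c"
  unfolding le_ord_def using ord_trans by blast

lemma ex_le_ord_greatest:
  assumes "finite F" "F \<noteq> {}"
  shows "\<exists>a\<in>F. \<forall>b\<in>F. le_ord ord b a"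
  using finite_has_greatest_wrt[of ord, OF ord_trans ord_total assms]
  unfolding le_ord_def .

lemma ex_le_ord_least:
  assumes "finite F" "F \<noteq> {}"
  shows "\<exists>a\<in>F. \<forall>b\<in>F. le_ord ord a b"
proof -
  have "\<exists>a\<in>F. \<forall>b\<in>F. b = a \<or> ord a b"
  proof (rule finite_has_greatest_wrt[of "\<lambda>a b. ord b a", OF _ _ assms])
    show "ord b a \<Longrightarrow> ord c b \<Longrightarrow> ord c a" for a b c by (rule ord_trans)
    show "a \<noteq> b \<Longrightarrow> ord b a \<or> ord a b" for a b using ord_total by blast
  qed
  then show ?thesis unfolding le_ord_def by (metis (full_types))
qed

lemma LT_eqI:
  assumes "\<eta> a \<noteq> 0" "\<And>\<beta>. \<eta> \<beta> \<noteq> 0 \<Longrightarrow> le_ord ord \<beta> a"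
  shows "LT ord \<eta> = a"
  unfolding LT_def using assms le_ord_antisym by (intro the_equality) blast+

lemma
  assumes "is_E \<eta>" "\<eta> \<noteq> (\<lambda>_. 0)"
  shows coeff_LT_nonzero: "\<eta> (LT ord \<eta>) \<noteq> 0"
    and le_ord_LT: "\<eta> \<beta> \<noteq> 0 \<Longrightarrow> le_ord ord \<beta> (LT ord \<eta>)"
proof -
  have "finite {\<alpha>. \<eta> \<alpha> \<noteq> 0}" "{\<alpha>. \<eta> \<alpha> \<noteq> 0} \<noteq> {}"
    using assms by (auto simp: is_E_def)
  from ex_le_ord_greatest[OF this]
  obtain a where a: "\<eta> a \<noteq> 0" "\<forall>\<beta>. \<eta> \<beta> \<noteq> 0 \<longrightarrow> le_ord ord \<beta> a"
    by blast
  then have "LT ord \<eta> = a" using LT_eqI by blast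
  then show "\<eta> (LT ord \<eta>) \<noteq> 0" "\<eta> \<beta> \<noteq> 0 \<Longrightarrow> le_ord ord \<beta> (LT ord \<eta>)" using a by auto
qed

lemma LT_cancel_less:
  assumes "is_E a" "is_E b" "a \<noteq> (\<lambda>_. 0)" "b \<noteq> (\<lambda>_. 0)"
    and L: "LT ord a = L" "LT ord b = L"
    and nz: "(\<lambda>\<alpha>. a \<alpha> - (a L / b L) * b \<alpha>) \<noteq> (\<lambda>_. 0)"
  shows "ord (LT ord (\<lambda>\<alpha>. a \<alpha> - (a L / b L) * b \<alpha>)) L"
proof -
  let ?e = "\<lambda>\<alpha>. a \<alpha> - (a L / b L) * b \<alpha>"
  have bL: "b L \<noteq> 0" using coeff_LT_nonzero[OF assms(2,4)] L by simp
  have "is_E ?e" using is_E_add_scale[OF assms(1,2), of "- (a L / b L)"] by simp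
  then have e_LT: "?e (LT ord ?e) \<noteq> 0" using coeff_LT_nonzero nz by blast
  then have "a (LT ord ?e) \<noteq> 0 \<or> b (LT ord ?e) \<noteq> 0" by auto
  then have "le_ord ord (LT ord ?e) L"
    using le_ord_LT[OF assms(1,3)] le_ord_LT[OF assms(2,4)] L by auto
  moreover have "LT ord ?e \<noteq> L" using e_LT bL by auto
  ultimately show ?thesis unfolding le_ord_def by blast
qed

end

section \<open>Submodules of \<open>E\<close>\<close>

lemma finite_shifted_support:
  assumes "is_E \<eta>"
  shows "finite {\<gamma>. \<eta> (\<lambda>v. \<beta> v + \<gamma> v) \<noteq> 0}"
proof -
  have "inj (\<lambda>(\<gamma>::'a \<Rightarrow> nat) v. \<beta> v + \<gamma> v)"
    by (auto simp: inj_def fun_eq_iff)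
  moreover have "finite {\<alpha>. \<eta> \<alpha> \<noteq> 0}" using assms is_E_def by blast
  ultimately have "finite ((\<lambda>\<gamma> v. \<beta> v + \<gamma> v) -` {\<alpha>. \<eta> \<alpha> \<noteq> 0})"
    by (rule finite_vimageI[rotated])
  then show ?thesis by (simp add: vimage_def)
qed

lemma smult_E_eq_sum:
  assumes "finite G" "{\<gamma>. \<eta> (\<lambda>v. \<beta> v + \<gamma> v) \<noteq> 0} \<subseteq> G"
  shows "smult_E s \<eta> \<beta> = (\<Sum>\<gamma>\<in>G. s \<gamma> * \<eta> (\<lambda>v. \<beta> v + \<gamma> v))"
  unfolding smult_E_def by (rule sum.mono_neutral_left[OF assms]) auto

lemma smult_E_add:
  assumes "is_E a" "is_E b"
  shows "smult_E s (\<lambda>\<alpha>. a \<alpha> + b \<alpha>) = (\<lambda>\<beta>. smult_E s a \<beta> + smult_E s b \<beta>)"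
proof
  fix \<beta>
  let ?G = "{\<gamma>. a (\<lambda>v. \<beta> v + \<gamma> v) \<noteq> 0} \<union> {\<gamma>. b (\<lambda>v. \<beta> v + \<gamma> v) \<noteq> 0}"
  have G: "finite ?G" using finite_shifted_support assms by blast
  have "smult_E s (\<lambda>\<alpha>. a \<alpha> + b \<alpha>) \<beta>
      = (\<Sum>\<gamma>\<in>?G. s \<gamma> * (a (\<lambda>v. \<beta> v + \<gamma> v) + b (\<lambda>v. \<beta> v + \<gamma> v)))"
    by (rule smult_E_eq_sum[OF G]) auto
  also have "\<dots> = (\<Sum>\<gamma>\<in>?G. s \<gamma> * a (\<lambda>v. \<beta> v + \<gamma> v)) + (\<Sum>\<gamma>\<in>?G. s \<gamma> * b (\<lambda>v. \<beta> v + \<gamma> v))"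
    by (simp add: distrib_left sum.distrib)
  also have "\<dots> = smult_E s a \<beta> + smult_E s b \<beta>"
    by (simp add: smult_E_eq_sum[OF G])
  finally show "smult_E s (\<lambda>\<alpha>. a \<alpha> + b \<alpha>) \<beta> = smult_E s a \<beta> + smult_E s b \<beta>" .
qed

lemma smult_E_scale: "smult_E s (\<lambda>\<alpha>. c * a \<alpha>) = (\<lambda>\<beta>. c * smult_E s a \<beta>)"
proof (cases "c = 0")
  case False
  then have "\<And>\<beta>. {\<gamma>. c * a (\<lambda>v. \<beta> v + \<gamma> v) \<noteq> 0} = {\<gamma>. a (\<lambda>v. \<beta> v + \<gamma> v) \<noteq> 0}" by auto
  then show ?thesis unfolding smult_E_def by (simp add: sum_distrib_left mult.left_commute)
qed (simp add: smult_E_def)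

lemma smult_E_add_left:
  "smult_E (\<lambda>\<gamma>. s1 \<gamma> + s2 \<gamma>) \<eta> = (\<lambda>\<beta>. smult_E s1 \<eta> \<beta> + smult_E s2 \<eta> \<beta>)"
  unfolding smult_E_def by (simp add: sum.distrib distrib_right)

lemma smult_E_const:
  assumes "is_E \<eta>"
  shows "smult_E (\<lambda>\<gamma>. if \<gamma> = (\<lambda>_. 0) then c else 0) \<eta> = (\<lambda>\<alpha>. c * \<eta> \<alpha>)"
proof
  fix \<beta>
  have "smult_E (\<lambda>\<gamma>. if \<gamma> = (\<lambda>_. 0) then c else 0) \<eta> \<beta>
     = (\<Sum>\<gamma>\<in>{\<gamma>. \<eta> (\<lambda>v. \<beta> v + \<gamma> v) \<noteq> 0}. if \<gamma> = (\<lambda>_. 0) then c * \<eta> \<beta> else 0)"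
    unfolding smult_E_def by (rule sum.cong) auto
  also have "\<dots> = c * \<eta> \<beta>"
    using finite_shifted_support[OF assms] by (simp add: sum.delta')
  finally show "smult_E (\<lambda>\<gamma>. if \<gamma> = (\<lambda>_. 0) then c else 0) \<eta> \<beta> = c * \<eta> \<beta>" .
qed

lemma smult_E_zero: "smult_E (\<lambda>_. 0) \<eta> = (\<lambda>_. 0)"
  unfolding smult_E_def by simp

lemma smult_E_nonzeroD:
  assumes "smult_E s \<eta> \<beta> \<noteq> 0"
  shows "\<exists>\<gamma>. s \<gamma> \<noteq> 0 \<and> \<eta> (\<lambda>v. \<beta> v + \<gamma> v) \<noteq> 0"
  using sum.not_neutral_contains_not_neutral[OF assms[unfolded smult_E_def]] by auto

lemma submodule_is_E: "submodule M \<Longrightarrow> a \<in> M \<Longrightarrow> is_E a"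
  unfolding submodule_def by blast

lemma submodule_zero: "submodule M \<Longrightarrow> (\<lambda>_. 0) \<in> M"
  unfolding submodule_def by blast

lemma submodule_add: "submodule M \<Longrightarrow> a \<in> M \<Longrightarrow> b \<in> M \<Longrightarrow> (\<lambda>\<alpha>. a \<alpha> + b \<alpha>) \<in> M"
  unfolding submodule_def by blast

lemma submodule_smult: "submodule M \<Longrightarrow> a \<in> M \<Longrightarrow> smult_E s a \<in> M"
  unfolding submodule_def by blast

lemma submodule_scale: "submodule M \<Longrightarrow> a \<in> M \<Longrightarrow> (\<lambda>\<alpha>. c * a \<alpha>) \<in> M"
  using submodule_smult[of M a "\<lambda>\<gamma>. if \<gamma> = (\<lambda>_. 0) then c else 0"]
  by (simp add: smult_E_const submodule_is_E)

lemma submodule_add_scale: "submodule M \<Longrightarrow> a \<in> M \<Longrightarrow> b \<in> M \<Longrightarrow> (\<lambda>\<alpha>. a \<alpha> + c * b \<alpha>) \<in> M"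
  using submodule_add submodule_scale by blast

lemma submodule_diff_scale: "submodule M \<Longrightarrow> a \<in> M \<Longrightarrow> b \<in> M \<Longrightarrow> (\<lambda>\<alpha>. a \<alpha> - c * b \<alpha>) \<in> M"
  using submodule_add_scale[of M a b "- c"] by simp

lemma submodule_diff: "submodule M \<Longrightarrow> a \<in> M \<Longrightarrow> b \<in> M \<Longrightarrow> (\<lambda>\<alpha>. a \<alpha> - b \<alpha>) \<in> M"
  using submodule_diff_scale[of M a b 1] by simp

lemma submoduleI:
  assumes "M \<subseteq> Collect is_E" "(\<lambda>_. 0) \<in> M"
    and "\<And>a b. a \<in> M \<Longrightarrow> b \<in> M \<Longrightarrow> (\<lambda>\<alpha>. a \<alpha> + b \<alpha>) \<in> M"
    and "\<And>s a. a \<in> M \<Longrightarrow> smult_E s a \<in> M"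
  shows "submodule M"
  using assms unfolding submodule_def by blast

lemma submodule_Inter:
  assumes sub: "\<And>M. M \<in> \<M> \<Longrightarrow> submodule M" and "M0 \<in> \<M>"
  shows "submodule (\<Inter>\<M>)"
proof (rule submoduleI)
  show "\<Inter>\<M> \<subseteq> Collect is_E" using submodule_is_E[OF sub[OF \<open>M0 \<in> \<M>\<close>]] \<open>M0 \<in> \<M>\<close> by blast
  show "(\<lambda>_. 0) \<in> \<Inter>\<M>" using sub submodule_zero by blast
  show "(\<lambda>\<alpha>. a \<alpha> + b \<alpha>) \<in> \<Inter>\<M>" if "a \<in> \<Inter>\<M>" "b \<in> \<Inter>\<M>" for a b
    using that sub submodule_add by blast
  show "smult_E s a \<in> \<Inter>\<M>" if "a \<in> \<Inter>\<M>" for s a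
    using that sub submodule_smult by blast
qed

lemma
  assumes "submodule N" "A \<subseteq> N"
  shows submodule_gen_sub: "submodule (gen_sub A)"
    and gen_sub_subset: "gen_sub A \<subseteq> N"
proof -
  have N: "N \<in> {M. submodule M \<and> A \<subseteq> M}" using assms by blast
  then show "submodule (gen_sub A)" unfolding gen_sub_def by (rule submodule_Inter[rotated]) blast
  show "gen_sub A \<subseteq> N" unfolding gen_sub_def using N by blast
qed

lemma
  assumes "submodule N"
  shows submodule_T1: "submodule (T1 N)"
    and T1_subset: "T1 N \<subseteq> N"
  unfolding T1_def using submodule_gen_sub[OF assms] gen_sub_subset[OF assms] by auto

lemma LTs_mono: "A \<subseteq> B \<Longrightarrow> LTs ord A \<subseteq> LTs ord B"
  unfolding LTs_def by blast

lemma LTs_memI: "\<eta> \<in> M \<Longrightarrow> \<eta> \<noteq> (\<lambda>_. 0) \<Longrightarrow> LT ord \<eta> \<in> LTs ord M"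
  unfolding LTs_def by blast

lemma LTs_memE:
  assumes "\<alpha> \<in> LTs ord M"
  obtains \<eta> where "\<eta> \<in> M" "\<eta> \<noteq> (\<lambda>_. 0)" "LT ord \<eta> = \<alpha>"
  using assms unfolding LTs_def by blast

section \<open>Finite length\<close>

definition terms_of :: "(('v \<Rightarrow> nat) \<Rightarrow> 'k::field) set \<Rightarrow> ('v \<Rightarrow> nat) set" where
  "terms_of N = {\<alpha>. \<exists>\<eta>\<in>N. \<eta> \<alpha> \<noteq> 0}"

definition deg_bounded :: "(('v \<Rightarrow> nat) \<Rightarrow> 'k::field) set \<Rightarrow> nat \<Rightarrow> (('v \<Rightarrow> nat) \<Rightarrow> 'k) set" where
  "deg_bounded N d = {\<eta>\<in>N. \<forall>\<alpha>. \<eta> \<alpha> \<noteq> 0 \<longrightarrow> (\<forall>v. \<alpha> v \<le> d)}"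

lemma finite_length_not_strict_chain:
  assumes "finite_length N" "\<And>i. submodule (c i)" "\<And>i. c i \<subseteq> N"
  shows "\<exists>i. \<not> c i \<subset> c (Suc i)"
proof -
  obtain m where m: "\<forall>(c::nat \<Rightarrow> (('a \<Rightarrow> nat) \<Rightarrow> 'b) set) k.
      (\<forall>i\<le>k. submodule (c i) \<and> c i \<subseteq> N) \<and> (\<forall>i<k. c i \<subset> c (Suc i)) \<longrightarrow> k \<le> m"
    using assms(1) unfolding finite_length_def by blast
  have "\<not> (\<forall>i<Suc m. c i \<subset> c (Suc i))"
    using spec[OF spec[OF m, of c], of "Suc m"] assms(2,3) by simp
  then show ?thesis by blast
qed

lemma deg_bounded_subset: "deg_bounded N d \<subseteq> N"
  unfolding deg_bounded_def by blast

lemma deg_bounded_mono: "d \<le> d' \<Longrightarrow> deg_bounded N d \<subseteq> deg_bounded N d'"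
  unfolding deg_bounded_def using le_trans[of _ d d'] by blast

lemma submodule_deg_bounded:
  assumes N: "submodule N"
  shows "submodule (deg_bounded N d)"
proof (rule submoduleI)
  show "deg_bounded N d \<subseteq> Collect is_E"
    using submodule_is_E[OF N] deg_bounded_subset by blast
  show "(\<lambda>_. 0) \<in> deg_bounded N d"
    using submodule_zero[OF N] unfolding deg_bounded_def by simp
  show "(\<lambda>\<alpha>. a \<alpha> + b \<alpha>) \<in> deg_bounded N d" if "a \<in> deg_bounded N d" "b \<in> deg_bounded N d" for a b
  proof -
    have "a \<alpha> + b \<alpha> \<noteq> 0 \<Longrightarrow> a \<alpha> \<noteq> 0 \<or> b \<alpha> \<noteq> 0" for \<alpha> by auto
    then show ?thesis using that submodule_add[OF N] unfolding deg_bounded_def by blast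
  qed
  show "smult_E s a \<in> deg_bounded N d" if a: "a \<in> deg_bounded N d" for s a
  proof -
    have "\<beta> v \<le> d" if nz: "smult_E s a \<beta> \<noteq> 0" for \<beta> v
    proof -
      obtain \<gamma> where "a (\<lambda>v. \<beta> v + \<gamma> v) \<noteq> 0" using smult_E_nonzeroD[OF nz] by blast
      then have "\<beta> v + \<gamma> v \<le> d" using a unfolding deg_bounded_def by auto
      then show ?thesis by simp
    qed
    then show ?thesis using a submodule_smult[OF N] unfolding deg_bounded_def by blast
  qed
qed

lemma ex_deg_bounded:
  fixes N :: "(('v::finite \<Rightarrow> nat) \<Rightarrow> 'k::field) set"
  assumes "submodule N" "\<eta> \<in> N"
  shows "\<exists>d. \<eta> \<in> deg_bounded N d"
proof -
  let ?F = "(\<lambda>(\<alpha>, v). \<alpha> v) ` ({\<alpha>. \<eta> \<alpha> \<noteq> 0} \<times> UNIV)"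
  have "finite {\<alpha>. \<eta> \<alpha> \<noteq> 0}" using submodule_is_E[OF assms] is_E_def by blast
  then have "finite ?F" by simp
  moreover have "\<eta> \<alpha> \<noteq> 0 \<Longrightarrow> \<alpha> v \<in> ?F" for \<alpha> v by force
  ultimately have "\<eta> \<alpha> \<noteq> 0 \<Longrightarrow> \<alpha> v \<le> Max ?F" for \<alpha> v by simp
  then show ?thesis using assms(2) unfolding deg_bounded_def by blast
qed

lemma finite_bounded_exponents: "finite {\<alpha>::'v::finite \<Rightarrow> nat. \<forall>v. \<alpha> v \<le> D}"
  using finite_set_of_finite_funs[of "UNIV :: 'v set" "{..D}" 0] by simp

text \<open>By finite length the submodules \<open>deg_bounded N d\<close> cannot keep growing, so one of them is \<open>N\<close>.\<close>
lemma finite_terms_of: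
  fixes N :: "(('v::finite \<Rightarrow> nat) \<Rightarrow> 'k::field) set"
  assumes N: "submodule N" and "finite_length N"
  shows "finite (terms_of N)"
proof -
  have "\<exists>D. deg_bounded N D = N"
  proof (rule ccontr)
    assume none: "\<nexists>D. deg_bounded N D = N"
    have "\<exists>d'. deg_bounded N d \<subset> deg_bounded N d'" for d
    proof -
      obtain \<eta> where \<eta>: "\<eta> \<in> N" "\<eta> \<notin> deg_bounded N d"
        using none deg_bounded_subset by blast
      obtain d0 where "\<eta> \<in> deg_bounded N d0" using ex_deg_bounded[OF N \<eta>(1)] by blast
      then have "\<eta> \<in> deg_bounded N (max d d0)" using deg_bounded_mono[of d0 "max d d0" N] by auto
      then show ?thesis using \<eta>(2) deg_bounded_mono[of d "max d d0" N] by auto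
    qed
    then obtain g where g: "\<forall>d. deg_bounded N d \<subset> deg_bounded N (g d)"
      using choice[of "\<lambda>d d'. deg_bounded N d \<subset> deg_bounded N d'"] by blast
    have "\<exists>i. \<not> deg_bounded N ((g ^^ i) 0) \<subset> deg_bounded N ((g ^^ Suc i) 0)"
      using finite_length_not_strict_chain[of N "\<lambda>i. deg_bounded N ((g ^^ i) 0)"]
        assms(2) submodule_deg_bounded[OF N] deg_bounded_subset by blast
    then show False using g by simp
  qed
  then obtain D where "deg_bounded N D = N" by blast
  then have "terms_of N \<subseteq> {\<alpha>. \<forall>v. \<alpha> v \<le> D}"
    unfolding terms_of_def deg_bounded_def by blast
  then show ?thesis using finite_bounded_exponents finite_subset by blast
qed

section \<open>The module \<open>M + K\<xi>\<close>\<close>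

definition line_ext :: "(('v \<Rightarrow> nat) \<Rightarrow> 'k::field) set \<Rightarrow> (('v \<Rightarrow> nat) \<Rightarrow> 'k) \<Rightarrow> (('v \<Rightarrow> nat) \<Rightarrow> 'k) set" where
  "line_ext M \<xi> = {\<lambda>\<alpha>. m \<alpha> + c * \<xi> \<alpha> | m c. m \<in> M}"

definition line_coeff :: "(('v \<Rightarrow> nat) \<Rightarrow> 'k::field) set \<Rightarrow> (('v \<Rightarrow> nat) \<Rightarrow> 'k) \<Rightarrow> (('v \<Rightarrow> nat) \<Rightarrow> 'k) \<Rightarrow> 'k" where
  "line_coeff M \<xi> a = (THE c. (\<lambda>\<alpha>. a \<alpha> - c * \<xi> \<alpha>) \<in> M)"

lemma line_extI: "m \<in> M \<Longrightarrow> x = (\<lambda>\<alpha>. m \<alpha> + c * \<xi> \<alpha>) \<Longrightarrow> x \<in> line_ext M \<xi>"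
  unfolding line_ext_def by blast

lemma line_extE:
  assumes "x \<in> line_ext M \<xi>"
  obtains m c where "m \<in> M" "x = (\<lambda>\<alpha>. m \<alpha> + c * \<xi> \<alpha>)"
  using assms unfolding line_ext_def by blast

lemma subset_line_ext: "M \<subseteq> line_ext M \<xi>"
  by (auto intro: line_extI[where c = 0])

lemma mem_line_ext_self: "submodule M \<Longrightarrow> \<xi> \<in> line_ext M \<xi>"
  by (rule line_extI[OF submodule_zero, where c = 1]) simp_all

lemma line_ext_subset:
  assumes "submodule M" "x \<in> line_ext M \<xi>"
  shows "line_ext M x \<subseteq> line_ext M \<xi>"
proof
  fix y assume "y \<in> line_ext M x"
  then obtain m' d where m': "m' \<in> M" "y = (\<lambda>\<alpha>. m' \<alpha> + d * x \<alpha>)" by (rule line_extE)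
  obtain m c where m: "m \<in> M" "x = (\<lambda>\<alpha>. m \<alpha> + c * \<xi> \<alpha>)" using assms(2) by (rule line_extE)
  have "y = (\<lambda>\<alpha>. (m' \<alpha> + d * m \<alpha>) + (d * c) * \<xi> \<alpha>)"
    unfolding m'(2) m(2) by (simp add: algebra_simps)
  then show "y \<in> line_ext M \<xi>"
    by (rule line_extI[OF submodule_add_scale[OF assms(1) m'(1) m(1)]])
qed

lemma line_ext_subset_submodule:
  assumes "submodule N" "M \<subseteq> N" "\<xi> \<in> N"
  shows "line_ext M \<xi> \<subseteq> N"
proof
  fix x assume "x \<in> line_ext M \<xi>"
  then obtain m c where "m \<in> M" "x = (\<lambda>\<alpha>. m \<alpha> + c * \<xi> \<alpha>)" by (rule line_extE)
  then show "x \<in> N" using submodule_add_scale[OF assms(1) _ assms(3)] assms(2) by blast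
qed

text \<open>Since \<open>\<xi> \<notin> M\<close>, the coefficient of \<open>\<xi>\<close> in \<open>m + c \<xi>\<close> is determined.\<close>
lemma line_coeff_eq:
  assumes M: "submodule M" and "\<xi> \<notin> M" "m \<in> M"
  shows "line_coeff M \<xi> (\<lambda>\<alpha>. m \<alpha> + c * \<xi> \<alpha>) = c"
  unfolding line_coeff_def
proof (rule the_equality)
  show "(\<lambda>\<alpha>. m \<alpha> + c * \<xi> \<alpha> - c * \<xi> \<alpha>) \<in> M" using \<open>m \<in> M\<close> by simp
next
  fix d assume d: "(\<lambda>\<alpha>. m \<alpha> + c * \<xi> \<alpha> - d * \<xi> \<alpha>) \<in> M"
  show "d = c"
  proof (rule ccontr)
    assume "d \<noteq> c"
    have "(\<lambda>\<alpha>. (m \<alpha> + c * \<xi> \<alpha> - d * \<xi> \<alpha>) - m \<alpha>) \<in> M"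
      by (rule submodule_diff[OF M d \<open>m \<in> M\<close>])
    then have "(\<lambda>\<alpha>. inverse (c - d) * ((m \<alpha> + c * \<xi> \<alpha> - d * \<xi> \<alpha>) - m \<alpha>)) \<in> M"
      by (rule submodule_scale[OF M])
    moreover have "(\<lambda>\<alpha>. inverse (c - d) * ((m \<alpha> + c * \<xi> \<alpha> - d * \<xi> \<alpha>) - m \<alpha>)) = \<xi>"
    proof
      fix \<alpha>
      have "(m \<alpha> + c * \<xi> \<alpha> - d * \<xi> \<alpha>) - m \<alpha> = (c - d) * \<xi> \<alpha>" by (simp add: algebra_simps)
      then show "inverse (c - d) * ((m \<alpha> + c * \<xi> \<alpha> - d * \<xi> \<alpha>) - m \<alpha>) = \<xi> \<alpha>"
        using \<open>d \<noteq> c\<close> by simp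
    qed
    ultimately show False using \<open>\<xi> \<notin> M\<close> by simp
  qed
qed

context
  fixes M :: "(('v \<Rightarrow> nat) \<Rightarrow> 'k::field) set" and \<xi> :: "('v \<Rightarrow> nat) \<Rightarrow> 'k"
  assumes M: "submodule M" and \<xi>: "is_E \<xi>"
    and smult_\<xi>: "\<And>s. \<exists>m\<in>M. smult_E s \<xi> = (\<lambda>\<beta>. m \<beta> + s (\<lambda>_. 0) * \<xi> \<beta>)"
begin

lemma smult_line_ext:
  assumes "m \<in> M"
  shows "\<exists>m'\<in>M. smult_E s (\<lambda>\<alpha>. m \<alpha> + c * \<xi> \<alpha>) = (\<lambda>\<beta>. m' \<beta> + (c * s (\<lambda>_. 0)) * \<xi> \<beta>)"
proof -
  obtain m' where m': "m' \<in> M" "smult_E s \<xi> = (\<lambda>\<beta>. m' \<beta> + s (\<lambda>_. 0) * \<xi> \<beta>)"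
    using smult_\<xi> by blast
  have "is_E (\<lambda>\<alpha>. c * \<xi> \<alpha>)" using is_E_add_scale[of "\<lambda>_. 0" \<xi> c] \<xi> by (simp add: is_E_def)
  then have "smult_E s (\<lambda>\<alpha>. m \<alpha> + c * \<xi> \<alpha>) = (\<lambda>\<beta>. smult_E s m \<beta> + c * smult_E s \<xi> \<beta>)"
    using smult_E_add[OF submodule_is_E[OF M assms]] by (simp add: smult_E_scale)
  also have "\<dots> = (\<lambda>\<beta>. (smult_E s m \<beta> + c * m' \<beta>) + (c * s (\<lambda>_. 0)) * \<xi> \<beta>)"
    unfolding m'(2) by (simp add: algebra_simps)
  finally show ?thesis
    using submodule_add_scale[OF M submodule_smult[OF M assms] m'(1), of s c]
    by (intro bexI[of _ "\<lambda>\<beta>. smult_E s m \<beta> + c * m' \<beta>"])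
qed

lemma sum_sub_cyclic_eq_line_ext: "sum_sub M (cyclic \<xi>) = line_ext M \<xi>"
proof
  show "sum_sub M (cyclic \<xi>) \<subseteq> line_ext M \<xi>"
  proof
    fix x assume "x \<in> sum_sub M (cyclic \<xi>)"
    then obtain a s where a: "a \<in> M" and x: "x = (\<lambda>\<alpha>. a \<alpha> + smult_E s \<xi> \<alpha>)"
      unfolding sum_sub_def cyclic_def by blast
    obtain m where m: "m \<in> M" "smult_E s \<xi> = (\<lambda>\<beta>. m \<beta> + s (\<lambda>_. 0) * \<xi> \<beta>)"
      using smult_\<xi> by blast
    have "x = (\<lambda>\<alpha>. (a \<alpha> + m \<alpha>) + s (\<lambda>_. 0) * \<xi> \<alpha>)" unfolding x m(2) by (simp add: add.assoc)
    then show "x \<in> line_ext M \<xi>" by (rule line_extI[OF submodule_add[OF M a m(1)]])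
  qed
  show "line_ext M \<xi> \<subseteq> sum_sub M (cyclic \<xi>)"
  proof
    fix x assume "x \<in> line_ext M \<xi>"
    then obtain m c where m: "m \<in> M" and x: "x = (\<lambda>\<alpha>. m \<alpha> + c * \<xi> \<alpha>)" by (rule line_extE)
    have "smult_E (\<lambda>\<gamma>. if \<gamma> = (\<lambda>_. 0) then c else 0) \<xi> \<in> cyclic \<xi>" unfolding cyclic_def by blast
    then have "(\<lambda>\<alpha>. c * \<xi> \<alpha>) \<in> cyclic \<xi>" by (simp add: smult_E_const[OF \<xi>])
    then show "x \<in> sum_sub M (cyclic \<xi>)"
      unfolding sum_sub_def x using m by (intro CollectI exI[of _ m] exI[of _ "\<lambda>\<alpha>. c * \<xi> \<alpha>"]) simp
  qed
qed

lemma submodule_line_ext: "submodule (line_ext M \<xi>)"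
proof (rule submoduleI)
  show "line_ext M \<xi> \<subseteq> Collect is_E"
  proof
    fix x assume "x \<in> line_ext M \<xi>"
    then obtain m c where "m \<in> M" "x = (\<lambda>\<alpha>. m \<alpha> + c * \<xi> \<alpha>)" by (rule line_extE)
    then show "x \<in> Collect is_E" using is_E_add_scale[OF submodule_is_E[OF M] \<xi>] by simp
  qed
  show "(\<lambda>_. 0) \<in> line_ext M \<xi>" using subset_line_ext submodule_zero[OF M] by blast
  show "(\<lambda>\<alpha>. a \<alpha> + b \<alpha>) \<in> line_ext M \<xi>" if a: "a \<in> line_ext M \<xi>" and b: "b \<in> line_ext M \<xi>" for a b
  proof -
    obtain m1 c1 where 1: "m1 \<in> M" "a = (\<lambda>\<alpha>. m1 \<alpha> + c1 * \<xi> \<alpha>)" using a by (rule line_extE)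
    obtain m2 c2 where 2: "m2 \<in> M" "b = (\<lambda>\<alpha>. m2 \<alpha> + c2 * \<xi> \<alpha>)" using b by (rule line_extE)
    have "(\<lambda>\<alpha>. a \<alpha> + b \<alpha>) = (\<lambda>\<alpha>. (m1 \<alpha> + m2 \<alpha>) + (c1 + c2) * \<xi> \<alpha>)"
      unfolding 1(2) 2(2) by (simp add: algebra_simps)
    then show ?thesis by (rule line_extI[OF submodule_add[OF M 1(1) 2(1)]])
  qed
  show "smult_E s a \<in> line_ext M \<xi>" if a: "a \<in> line_ext M \<xi>" for s a
  proof -
    obtain m c where m: "m \<in> M" "a = (\<lambda>\<alpha>. m \<alpha> + c * \<xi> \<alpha>)" using a by (rule line_extE)
    obtain m' where m': "m' \<in> M" "smult_E s a = (\<lambda>\<beta>. m' \<beta> + (c * s (\<lambda>_. 0)) * \<xi> \<beta>)"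
      using smult_line_ext[OF m(1)] m(2) by blast
    show ?thesis by (rule line_extI[OF m'])
  qed
qed

lemma quot_iso_K_line_ext:
  assumes "\<xi> \<notin> M"
  shows "quot_iso_K M (line_ext M \<xi>)"
  unfolding quot_iso_K_def
proof (intro exI[of _ "line_coeff M \<xi>"] conjI ballI allI)
  note coeff = line_coeff_eq[OF M assms]
  show "line_coeff M \<xi> (\<lambda>\<alpha>. a \<alpha> + b \<alpha>) = line_coeff M \<xi> a + line_coeff M \<xi> b"
    if a: "a \<in> line_ext M \<xi>" and b: "b \<in> line_ext M \<xi>" for a b
  proof -
    obtain m1 c1 where 1: "m1 \<in> M" "a = (\<lambda>\<alpha>. m1 \<alpha> + c1 * \<xi> \<alpha>)" using a by (rule line_extE)
    obtain m2 c2 where 2: "m2 \<in> M" "b = (\<lambda>\<alpha>. m2 \<alpha> + c2 * \<xi> \<alpha>)" using b by (rule line_extE)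
    have "(\<lambda>\<alpha>. a \<alpha> + b \<alpha>) = (\<lambda>\<alpha>. (m1 \<alpha> + m2 \<alpha>) + (c1 + c2) * \<xi> \<alpha>)"
      unfolding 1(2) 2(2) by (simp add: algebra_simps)
    then show ?thesis using coeff[OF submodule_add[OF M 1(1) 2(1)]] coeff[OF 1(1)] coeff[OF 2(1)] 1 2
      by simp
  qed
  show "line_coeff M \<xi> (smult_E s a) = s (\<lambda>_. 0) * line_coeff M \<xi> a" if a: "a \<in> line_ext M \<xi>" for s a
  proof -
    obtain m c where m: "m \<in> M" "a = (\<lambda>\<alpha>. m \<alpha> + c * \<xi> \<alpha>)" using a by (rule line_extE)
    obtain m' where m': "m' \<in> M" "smult_E s a = (\<lambda>\<beta>. m' \<beta> + (c * s (\<lambda>_. 0)) * \<xi> \<beta>)"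
      using smult_line_ext[OF m(1)] m(2) by blast
    have "line_coeff M \<xi> (smult_E s a) = c * s (\<lambda>_. 0)" unfolding m'(2) by (rule coeff[OF m'(1)])
    moreover have "line_coeff M \<xi> a = c" unfolding m(2) by (rule coeff[OF m(1)])
    ultimately show ?thesis by simp
  qed
  show "line_coeff M \<xi> ` line_ext M \<xi> = UNIV"
  proof -
    have "c = line_coeff M \<xi> (\<lambda>\<alpha>. 0 + c * \<xi> \<alpha>)" "(\<lambda>\<alpha>. 0 + c * \<xi> \<alpha>) \<in> line_ext M \<xi>" for c
      using coeff[OF submodule_zero[OF M]] line_extI[OF submodule_zero[OF M]] by auto
    then show ?thesis by blast
  qed
  show "{a \<in> line_ext M \<xi>. line_coeff M \<xi> a = 0} = M"
  proof
    show "{a \<in> line_ext M \<xi>. line_coeff M \<xi> a = 0} \<subseteq> M"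
    proof
      fix a assume "a \<in> {a \<in> line_ext M \<xi>. line_coeff M \<xi> a = 0}"
      then have a: "a \<in> line_ext M \<xi>" "line_coeff M \<xi> a = 0" by auto
      obtain m c where m: "m \<in> M" "a = (\<lambda>\<alpha>. m \<alpha> + c * \<xi> \<alpha>)" using a(1) by (rule line_extE)
      then have "c = 0" using coeff[OF m(1)] a(2) by simp
      then show "a \<in> M" using m by simp
    qed
    show "M \<subseteq> {a \<in> line_ext M \<xi>. line_coeff M \<xi> a = 0}"
    proof
      fix m assume "m \<in> M"
      then show "m \<in> {a \<in> line_ext M \<xi>. line_coeff M \<xi> a = 0}"
        using coeff[OF \<open>m \<in> M\<close>, of 0] subset_line_ext by auto
    qed
  qed
qed

end

section \<open>One step of the procedure\<close>

lemma valid_stepD: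
  assumes "valid_step ord N M \<xi>"
  shows "\<xi> \<in> N" "\<xi> \<noteq> (\<lambda>_. 0)" "LT ord \<xi> \<notin> LTs ord M"
  using assms unfolding valid_step_def by blast+

lemma valid_step_LT_le:
  "valid_step ord N M \<xi> \<Longrightarrow> \<eta> \<in> N \<Longrightarrow> \<eta> \<noteq> (\<lambda>_. 0) \<Longrightarrow> LT ord \<eta> \<notin> LTs ord M
    \<Longrightarrow> le_ord ord (LT ord \<xi>) (LT ord \<eta>)"
  unfolding valid_step_def by blast

lemma valid_step_not_mem:
  assumes "valid_step ord N M \<xi>"
  shows "\<xi> \<notin> M"
proof
  assume "\<xi> \<in> M"
  then have "LT ord \<xi> \<in> LTs ord M" by (rule LTs_memI[OF _ valid_stepD(2)[OF assms]])
  then show False using valid_stepD(3)[OF assms] by contradiction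
qed

locale lt_filtration = term_ord ord
  for ord :: "('v::finite \<Rightarrow> nat) \<Rightarrow> ('v \<Rightarrow> nat) \<Rightarrow> bool" +
  fixes N :: "(('v \<Rightarrow> nat) \<Rightarrow> 'k::field) set"
  assumes submodule_N: "submodule N"
    and finite_length_N: "finite_length N"
begin

lemma is_E_N: "\<eta> \<in> N \<Longrightarrow> is_E \<eta>"
  using submodule_is_E[OF submodule_N] .

lemma finite_terms: "finite (terms_of N)"
  by (rule finite_terms_of[OF submodule_N finite_length_N])

lemma LT_mem_terms: "\<eta> \<in> N \<Longrightarrow> \<eta> \<noteq> (\<lambda>_. 0) \<Longrightarrow> LT ord \<eta> \<in> terms_of N"
  using coeff_LT_nonzero[OF is_E_N] unfolding terms_of_def by blast

lemma valid_step_LT_unique: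
  assumes "valid_step ord N M \<xi>" "valid_step ord N M \<xi>'"
  shows "LT ord \<xi>' = LT ord \<xi>"
  by (rule le_ord_antisym[OF valid_step_LT_le[OF assms(2) valid_stepD[OF assms(1)]]
        valid_step_LT_le[OF assms(1) valid_stepD[OF assms(2)]]])

text \<open>Reductions are by induction on the number of terms of \<open>N\<close> below a leading term.\<close>
definition rank :: "('v \<Rightarrow> nat) \<Rightarrow> nat" where
  "rank \<alpha> = card {\<beta> \<in> terms_of N. ord \<beta> \<alpha>}"

lemma rank_less:
  assumes "ord \<beta> \<alpha>" "\<beta> \<in> terms_of N"
  shows "rank \<beta> < rank \<alpha>"
proof -
  let ?A = "{\<gamma> \<in> terms_of N. ord \<gamma> \<beta>}" and ?B = "{\<gamma> \<in> terms_of N. ord \<gamma> \<alpha>}"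
  have "?A \<subseteq> ?B"
  proof
    fix \<gamma> assume "\<gamma> \<in> ?A"
    then show "\<gamma> \<in> ?B" using ord_trans[OF _ assms(1)] by simp
  qed
  moreover have "\<beta> \<in> ?B - ?A" using assms ord_irrefl by simp
  ultimately have "?A \<subset> ?B" by blast
  moreover have "finite ?B" using finite_terms by simp
  ultimately show ?thesis unfolding rank_def by (simp add: psubset_card_mono)
qed

end

locale lt_step = lt_filtration ord N
  for ord :: "('v::finite \<Rightarrow> nat) \<Rightarrow> ('v \<Rightarrow> nat) \<Rightarrow> bool" and N :: "(('v \<Rightarrow> nat) \<Rightarrow> 'k::field) set" +
  fixes M :: "(('v \<Rightarrow> nat) \<Rightarrow> 'k::field) set"
  assumes submodule_M: "submodule M" and M_subset: "M \<subseteq> N"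
begin

text \<open>Division by \<open>M\<close>: within a downward closed region where every leading term of \<open>N\<close>
  is one of \<open>M\<close>, leading terms can be cancelled until nothing is left.\<close>
lemma mem_M_by_reduction:
  assumes down: "\<And>a b. a \<in> D \<Longrightarrow> ord b a \<Longrightarrow> b \<in> D"
    and LTs_D: "\<And>\<eta>. \<eta> \<in> N \<Longrightarrow> \<eta> \<noteq> (\<lambda>_. 0) \<Longrightarrow> LT ord \<eta> \<in> D \<Longrightarrow> LT ord \<eta> \<in> LTs ord M"
  shows "\<eta> \<in> N \<Longrightarrow> (\<eta> \<noteq> (\<lambda>_. 0) \<Longrightarrow> LT ord \<eta> \<in> D) \<Longrightarrow> \<eta> \<in> M"
proof (induction "rank (LT ord \<eta>)" arbitrary: \<eta> rule: less_induct)
  case less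
  show ?case
  proof (cases "\<eta> = (\<lambda>_. 0)")
    case True
    then show ?thesis using submodule_zero[OF submodule_M] by simp
  next
    case False
    let ?L = "LT ord \<eta>"
    have "?L \<in> D" using less.prems False by blast
    then obtain m where m: "m \<in> M" "m \<noteq> (\<lambda>_. 0)" "LT ord m = ?L"
      using LTs_D[OF less.prems(1) False] by (blast elim: LTs_memE)
    define \<eta>' where "\<eta>' = (\<lambda>\<alpha>. \<eta> \<alpha> - (\<eta> ?L / m ?L) * m \<alpha>)"
    have \<eta>'N: "\<eta>' \<in> N"
      unfolding \<eta>'_def using submodule_diff_scale[OF submodule_N less.prems(1)] m(1) M_subset by blast
    have "\<eta>' \<in> M"
    proof (cases "\<eta>' = (\<lambda>_. 0)")
      case True
      then show ?thesis using submodule_zero[OF submodule_M] by simp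
    next
      case nz: False
      have less_L: "ord (LT ord \<eta>') ?L"
        using LT_cancel_less[OF is_E_N[OF less.prems(1)] is_E_N[OF m(1)[THEN subsetD[OF M_subset]]]
            False m(2) refl m(3)] nz unfolding \<eta>'_def by blast
      have "rank (LT ord \<eta>') < rank ?L" by (rule rank_less[OF less_L LT_mem_terms[OF \<eta>'N nz]])
      moreover have "LT ord \<eta>' \<in> D" using down[OF \<open>?L \<in> D\<close> less_L] .
      ultimately show ?thesis using less.hyps \<eta>'N by blast
    qed
    then have "(\<lambda>\<alpha>. \<eta>' \<alpha> + (\<eta> ?L / m ?L) * m \<alpha>) \<in> M"
      by (rule submodule_add_scale[OF submodule_M _ m(1)])
    moreover have "(\<lambda>\<alpha>. \<eta>' \<alpha> + (\<eta> ?L / m ?L) * m \<alpha>) = \<eta>" unfolding \<eta>'_def by simp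
    ultimately show ?thesis by simp
  qed
qed

lemma valid_step_below_mem_M:
  assumes \<xi>: "valid_step ord N M \<xi>" and "\<eta> \<in> N"
    and below: "\<eta> \<noteq> (\<lambda>_. 0) \<Longrightarrow> ord (LT ord \<eta>) (LT ord \<xi>)"
  shows "\<eta> \<in> M"
proof (rule mem_M_by_reduction[where D = "{\<beta>. ord \<beta> (LT ord \<xi>)}"])
  show "b \<in> {\<beta>. ord \<beta> (LT ord \<xi>)}" if "a \<in> {\<beta>. ord \<beta> (LT ord \<xi>)}" "ord b a" for a b
    using ord_trans[OF that(2)] that(1) by simp
  show "LT ord \<eta>' \<in> LTs ord M"
    if "\<eta>' \<in> N" "\<eta>' \<noteq> (\<lambda>_. 0)" "LT ord \<eta>' \<in> {\<beta>. ord \<beta> (LT ord \<xi>)}" for \<eta>'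
    using that valid_step_LT_le[OF \<xi>] le_ord_iff_not_less by blast
qed (use assms in auto)

text \<open>Every \<open>x\<^sup>\<gamma>\<close> with \<open>\<gamma> \<noteq> 0\<close> moves \<open>\<xi>\<close> strictly below its leading term, hence into \<open>M\<close>.\<close>
lemma smult_valid_step:
  assumes \<xi>: "valid_step ord N M \<xi>"
  shows "\<exists>m\<in>M. smult_E s \<xi> = (\<lambda>\<beta>. m \<beta> + s (\<lambda>_. 0) * \<xi> \<beta>)"
proof -
  define s' where "s' = (\<lambda>\<gamma>. if \<gamma> = (\<lambda>_. 0::nat) then 0 else s \<gamma>)"
  have \<xi>N: "\<xi> \<in> N" and \<xi>0: "\<xi> \<noteq> (\<lambda>_. 0)" using valid_stepD[OF \<xi>] by auto
  have "s = (\<lambda>\<gamma>. s' \<gamma> + (if \<gamma> = (\<lambda>_. 0) then s (\<lambda>_. 0) else 0))"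
    by (rule ext) (simp add: s'_def)
  then have split: "smult_E s \<xi> = (\<lambda>\<beta>. smult_E s' \<xi> \<beta> + s (\<lambda>_. 0) * \<xi> \<beta>)"
    using smult_E_add_left[of s' "\<lambda>\<gamma>. if \<gamma> = (\<lambda>_. 0) then s (\<lambda>_. 0) else 0" \<xi>]
      smult_E_const[OF is_E_N[OF \<xi>N], of "s (\<lambda>_. 0)"] by simp
  let ?\<zeta> = "smult_E s' \<xi>"
  have \<zeta>N: "?\<zeta> \<in> N" using submodule_smult[OF submodule_N \<xi>N] .
  have "?\<zeta> \<in> M"
  proof (rule valid_step_below_mem_M[OF \<xi> \<zeta>N])
    assume "?\<zeta> \<noteq> (\<lambda>_. 0)"
    then have "?\<zeta> (LT ord ?\<zeta>) \<noteq> 0" using coeff_LT_nonzero[OF is_E_N[OF \<zeta>N]] by blast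
    then obtain \<gamma> where \<gamma>: "s' \<gamma> \<noteq> 0" "\<xi> (\<lambda>v. LT ord ?\<zeta> v + \<gamma> v) \<noteq> 0"
      using smult_E_nonzeroD by blast
    have "\<gamma> \<noteq> (\<lambda>_. 0)" using \<gamma>(1) by (auto simp: s'_def)
    then have "ord (LT ord ?\<zeta>) (\<lambda>v. LT ord ?\<zeta> v + \<gamma> v)" by (rule ord_less_add)
    moreover have "le_ord ord (\<lambda>v. LT ord ?\<zeta> v + \<gamma> v) (LT ord \<xi>)"
      by (rule le_ord_LT[OF is_E_N[OF \<xi>N] \<xi>0 \<gamma>(2)])
    ultimately show "ord (LT ord ?\<zeta>) (LT ord \<xi>)" by (rule less_le_ord_trans)
  qed
  then show ?thesis using split by blast
qed

lemma
  assumes \<xi>: "valid_step ord N M \<xi>"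
  shows sum_sub_cyclic_valid_step: "sum_sub M (cyclic \<xi>) = line_ext M \<xi>"
    and submodule_line_ext_valid_step: "submodule (line_ext M \<xi>)"
    and quot_iso_K_line_ext_valid_step: "quot_iso_K M (line_ext M \<xi>)"
    and line_ext_valid_step_subset: "line_ext M \<xi> \<subseteq> N"
    and psubset_line_ext_valid_step: "M \<subset> line_ext M \<xi>"
proof -
  note \<xi>E = is_E_N[OF valid_stepD(1)[OF \<xi>]]
  show "sum_sub M (cyclic \<xi>) = line_ext M \<xi>"
    by (rule sum_sub_cyclic_eq_line_ext[OF submodule_M \<xi>E smult_valid_step[OF \<xi>]])
  show "submodule (line_ext M \<xi>)"
    by (rule submodule_line_ext[OF submodule_M \<xi>E smult_valid_step[OF \<xi>]])
  show "quot_iso_K M (line_ext M \<xi>)"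
    by (rule quot_iso_K_line_ext[OF submodule_M \<xi>E smult_valid_step[OF \<xi>] valid_step_not_mem[OF \<xi>]])
  show "line_ext M \<xi> \<subseteq> N"
    by (rule line_ext_subset_submodule[OF submodule_N M_subset valid_stepD(1)[OF \<xi>]])
  show "M \<subset> line_ext M \<xi>"
    using subset_line_ext mem_line_ext_self[OF submodule_M] valid_step_not_mem[OF \<xi>] by blast
qed

text \<open>Two admissible choices have the same leading term, so their difference,
  after scaling, lies below it and hence in \<open>M\<close>.\<close>
lemma valid_step_mem_line_ext:
  assumes \<xi>: "valid_step ord N M \<xi>" and \<xi>': "valid_step ord N M \<xi>'"
  shows "\<xi>' \<in> line_ext M \<xi>"
proof -
  let ?L = "LT ord \<xi>"
  define \<delta> where "\<delta> = (\<lambda>\<alpha>. \<xi>' \<alpha> - (\<xi>' ?L / \<xi> ?L) * \<xi> \<alpha>)"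
  have \<delta>N: "\<delta> \<in> N"
    unfolding \<delta>_def by (rule submodule_diff_scale[OF submodule_N valid_stepD(1)[OF \<xi>'] valid_stepD(1)[OF \<xi>]])
  have "\<delta> \<in> M"
  proof (rule valid_step_below_mem_M[OF \<xi> \<delta>N])
    show "\<delta> \<noteq> (\<lambda>_. 0) \<Longrightarrow> ord (LT ord \<delta>) ?L"
      using LT_cancel_less[OF is_E_N[OF valid_stepD(1)[OF \<xi>']] is_E_N[OF valid_stepD(1)[OF \<xi>]]
          valid_stepD(2)[OF \<xi>'] valid_stepD(2)[OF \<xi>] valid_step_LT_unique[OF \<xi> \<xi>'] refl]
      unfolding \<delta>_def by blast
  qed
  moreover have "\<xi>' = (\<lambda>\<alpha>. \<delta> \<alpha> + (\<xi>' ?L / \<xi> ?L) * \<xi> \<alpha>)" unfolding \<delta>_def by simp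
  ultimately show ?thesis by (rule line_extI)
qed

lemma line_ext_valid_step_unique:
  "valid_step ord N M \<xi> \<Longrightarrow> valid_step ord N M \<xi>' \<Longrightarrow> line_ext M \<xi>' = line_ext M \<xi>"
  using line_ext_subset[OF submodule_M] valid_step_mem_line_ext by blast

lemma ex_valid_step:
  assumes "M \<noteq> N"
  shows "\<exists>\<xi>. valid_step ord N M \<xi>"
proof -
  let ?A = "{LT ord \<eta> | \<eta>. \<eta> \<in> N \<and> \<eta> \<noteq> (\<lambda>_. 0) \<and> LT ord \<eta> \<notin> LTs ord M}"
  have "?A \<noteq> {}"
  proof
    assume empty: "?A = {}"
    have "\<eta> \<in> M" if "\<eta> \<in> N" for \<eta>
    proof (rule mem_M_by_reduction[where D = UNIV])
      show "LT ord \<eta>' \<in> LTs ord M" if "\<eta>' \<in> N" "\<eta>' \<noteq> (\<lambda>_. 0)" "LT ord \<eta>' \<in> UNIV" for \<eta>'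
        using that empty by blast
    qed (use that in auto)
    then show False using assms M_subset by blast
  qed
  moreover have "?A \<subseteq> terms_of N" using LT_mem_terms by blast
  then have "finite ?A" using finite_terms finite_subset by blast
  ultimately obtain a where a: "a \<in> ?A" "\<forall>b\<in>?A. le_ord ord a b" using ex_le_ord_least by blast
  then obtain \<xi> where "\<xi> \<in> N" "\<xi> \<noteq> (\<lambda>_. 0)" "LT ord \<xi> \<notin> LTs ord M" "a = LT ord \<xi>" by blast
  then have "valid_step ord N M \<xi>" unfolding valid_step_def using a(2) by blast
  then show ?thesis by blast
qed

end

definition reduced :: "(('v \<Rightarrow> nat) \<Rightarrow> ('v \<Rightarrow> nat) \<Rightarrow> bool) \<Rightarrow> (('v \<Rightarrow> nat) \<Rightarrow> 'k::field) set
    \<Rightarrow> (('v \<Rightarrow> nat) \<Rightarrow> 'k) \<Rightarrow> bool" where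
  "reduced ord M \<eta> \<longleftrightarrow> (\<forall>\<alpha>. \<eta> \<alpha> \<noteq> 0 \<longrightarrow> \<alpha> \<notin> LTs ord M)"

context lt_step
begin

lemma ex_reduced_modulo_M:
  assumes "\<eta> \<in> N"
  shows "\<exists>m\<in>M. reduced ord M (\<lambda>\<alpha>. \<eta> \<alpha> - m \<alpha>)"
proof -
  have "\<forall>\<eta>\<in>N. (\<forall>\<alpha>. \<eta> \<alpha> \<noteq> 0 \<and> \<alpha> \<in> LTs ord M \<longrightarrow> rank \<alpha> < n)
      \<longrightarrow> (\<exists>m\<in>M. reduced ord M (\<lambda>\<alpha>. \<eta> \<alpha> - m \<alpha>))" for n
  proof (induction n)
    case 0
    show ?case
      using submodule_zero[OF submodule_M] by (auto simp: reduced_def intro!: bexI[of _ "\<lambda>_. 0"])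
  next
    case (Suc n)
    show ?case
    proof (intro ballI impI)
      fix \<eta> assume \<eta>: "\<eta> \<in> N" and bound: "\<forall>\<alpha>. \<eta> \<alpha> \<noteq> 0 \<and> \<alpha> \<in> LTs ord M \<longrightarrow> rank \<alpha> < Suc n"
      let ?B = "{\<alpha>. \<eta> \<alpha> \<noteq> 0 \<and> \<alpha> \<in> LTs ord M}"
      show "\<exists>m\<in>M. reduced ord M (\<lambda>\<alpha>. \<eta> \<alpha> - m \<alpha>)"
      proof (cases "?B = {}")
        case True
        then show ?thesis
          using submodule_zero[OF submodule_M] by (auto simp: reduced_def intro!: bexI[of _ "\<lambda>_. 0"])
      next
        case False
        have "?B \<subseteq> terms_of N" using \<eta> unfolding terms_of_def by blast
        then have "finite ?B" using finite_terms finite_subset by blast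
        then obtain \<alpha> where \<alpha>: "\<alpha> \<in> ?B" "\<forall>\<beta>\<in>?B. le_ord ord \<beta> \<alpha>"
          using ex_le_ord_greatest False by blast
        then obtain m1 where m1: "m1 \<in> M" "m1 \<noteq> (\<lambda>_. 0)" "LT ord m1 = \<alpha>"
          by (blast elim: LTs_memE)
        have m1E: "is_E m1" using is_E_N m1(1) M_subset by blast
        have m1\<alpha>: "m1 \<alpha> \<noteq> 0" using coeff_LT_nonzero[OF m1E m1(2)] m1(3) by simp
        define \<eta>' where "\<eta>' = (\<lambda>\<beta>. \<eta> \<beta> - (\<eta> \<alpha> / m1 \<alpha>) * m1 \<beta>)"
        have \<eta>'N: "\<eta>' \<in> N"
          unfolding \<eta>'_def using submodule_diff_scale[OF submodule_N \<eta>] m1(1) M_subset by blast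
        have "rank \<beta> < n" if \<beta>: "\<eta>' \<beta> \<noteq> 0" "\<beta> \<in> LTs ord M" for \<beta>
        proof -
          have "ord \<beta> \<alpha>"
          proof (rule ccontr)
            assume "\<not> ord \<beta> \<alpha>"
            moreover have "\<beta> \<noteq> \<alpha>" using \<beta>(1) m1\<alpha> unfolding \<eta>'_def by auto
            ultimately have "ord \<alpha> \<beta>" using ord_total by blast
            then have "m1 \<beta> = 0"
              using le_ord_LT[OF m1E m1(2)] m1(3) le_ord_iff_not_less by blast
            then have "\<beta> \<in> ?B" using \<beta> unfolding \<eta>'_def by simp
            then show False using \<alpha>(2) \<open>ord \<alpha> \<beta>\<close> le_ord_iff_not_less by blast
          qed
          moreover have "\<beta> \<in> terms_of N" using \<eta>'N \<beta>(1) unfolding terms_of_def by blast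
          ultimately have "rank \<beta> < rank \<alpha>" by (rule rank_less)
          moreover have "rank \<alpha> < Suc n" using bound \<alpha>(1) by blast
          ultimately show ?thesis by simp
        qed
        then obtain m2 where m2: "m2 \<in> M" "reduced ord M (\<lambda>\<beta>. \<eta>' \<beta> - m2 \<beta>)"
          using Suc.IH \<eta>'N by blast
        have "(\<lambda>\<beta>. m2 \<beta> + (\<eta> \<alpha> / m1 \<alpha>) * m1 \<beta>) \<in> M"
          by (rule submodule_add_scale[OF submodule_M m2(1) m1(1)])
        moreover have "(\<lambda>\<beta>. \<eta>' \<beta> - m2 \<beta>) = (\<lambda>\<beta>. \<eta> \<beta> - (m2 \<beta> + (\<eta> \<alpha> / m1 \<alpha>) * m1 \<beta>))"
          unfolding \<eta>'_def by (simp add: algebra_simps)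
        ultimately show ?thesis using m2(2) by auto
      qed
    qed
  qed
  moreover have "\<forall>\<alpha>. \<eta> \<alpha> \<noteq> 0 \<and> \<alpha> \<in> LTs ord M \<longrightarrow> rank \<alpha> < Suc (card (terms_of N))"
    unfolding rank_def using card_mono[OF finite_terms]
    by (simp add: le_imp_less_Suc)
  ultimately show ?thesis using assms by blast
qed

text \<open>Reducing by \<open>M\<close> cannot raise the leading term: the leading term of the subtracted
  element, being in \<open>LT(M)\<close>, must cancel against a term of \<open>\<xi>\<close>.\<close>
lemma LT_reduced_le:
  assumes \<xi>: "\<xi> \<in> N" "\<xi> \<noteq> (\<lambda>_. 0)" and m: "m \<in> M"
    and red: "reduced ord M (\<lambda>\<alpha>. \<xi> \<alpha> - m \<alpha>)" and nz: "(\<lambda>\<alpha>. \<xi> \<alpha> - m \<alpha>) \<noteq> (\<lambda>_. 0)"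
  shows "le_ord ord (LT ord (\<lambda>\<alpha>. \<xi> \<alpha> - m \<alpha>)) (LT ord \<xi>)"
proof -
  let ?\<zeta> = "\<lambda>\<alpha>. \<xi> \<alpha> - m \<alpha>" and ?L = "LT ord (\<lambda>\<alpha>. \<xi> \<alpha> - m \<alpha>)"
  have mE: "is_E m" using is_E_N m M_subset by blast
  have \<zeta>E: "is_E ?\<zeta>" using is_E_add_scale[OF is_E_N[OF \<xi>(1)] mE, of "-1"] by simp
  have "?\<zeta> ?L \<noteq> 0" by (rule coeff_LT_nonzero[OF \<zeta>E nz])
  then consider "\<xi> ?L \<noteq> 0" | "m ?L \<noteq> 0" by fastforce
  then show ?thesis
  proof cases
    case 1
    then show ?thesis by (rule le_ord_LT[OF is_E_N[OF \<xi>(1)] \<xi>(2)])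
  next
    case 2
    then have m0: "m \<noteq> (\<lambda>_. 0)" by auto
    have "LT ord m \<in> LTs ord M" by (rule LTs_memI[OF m m0])
    then have "?\<zeta> (LT ord m) = 0" using red unfolding reduced_def by blast
    then have "\<xi> (LT ord m) \<noteq> 0" using coeff_LT_nonzero[OF mE m0] by simp
    then have "le_ord ord (LT ord m) (LT ord \<xi>)" by (rule le_ord_LT[OF is_E_N[OF \<xi>(1)] \<xi>(2)])
    with le_ord_LT[OF mE m0 2] show ?thesis by (rule le_ord_trans)
  qed
qed

lemma ex_reduced_valid_step:
  assumes \<xi>: "valid_step ord N M \<xi>"
  shows "\<exists>\<zeta>. valid_step ord N M \<zeta> \<and> reduced ord M \<zeta>"
proof -
  have \<xi>N: "\<xi> \<in> N" and \<xi>0: "\<xi> \<noteq> (\<lambda>_. 0)" using valid_stepD[OF \<xi>] by auto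
  obtain m where m: "m \<in> M" and red: "reduced ord M (\<lambda>\<alpha>. \<xi> \<alpha> - m \<alpha>)"
    using ex_reduced_modulo_M[OF \<xi>N] by blast
  let ?\<zeta> = "\<lambda>\<alpha>. \<xi> \<alpha> - m \<alpha>"
  have \<zeta>N: "?\<zeta> \<in> N" using submodule_diff[OF submodule_N \<xi>N] m M_subset by blast
  have \<zeta>0: "?\<zeta> \<noteq> (\<lambda>_. 0)"
  proof
    assume "?\<zeta> = (\<lambda>_. 0)"
    then have "\<xi> = m" by (simp add: fun_eq_iff)
    then show False using valid_step_not_mem[OF \<xi>] m by blast
  qed
  have \<zeta>LT: "LT ord ?\<zeta> \<notin> LTs ord M"
    using red coeff_LT_nonzero[OF is_E_N[OF \<zeta>N] \<zeta>0] unfolding reduced_def by blast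
  have "le_ord ord (LT ord ?\<zeta>) (LT ord \<eta>)"
    if "\<eta> \<in> N" "\<eta> \<noteq> (\<lambda>_. 0)" "LT ord \<eta> \<notin> LTs ord M" for \<eta>
    using LT_reduced_le[OF \<xi>N \<xi>0 m red \<zeta>0] valid_step_LT_le[OF \<xi> that] by (rule le_ord_trans)
  then have "valid_step ord N M ?\<zeta>" unfolding valid_step_def using \<zeta>N \<zeta>0 \<zeta>LT by blast
  then show ?thesis using red by blast
qed

text \<open>The difference of two reduced admissible choices, scaled to cancel their common leading
  term, is reduced and lies below that term, so it must vanish.\<close>
lemma reduced_valid_step_unique:
  assumes \<zeta>: "valid_step ord N M \<zeta>" "reduced ord M \<zeta>" and \<zeta>': "valid_step ord N M \<zeta>'" "reduced ord M \<zeta>'"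
  shows "\<exists>c. c \<noteq> 0 \<and> \<zeta>' = (\<lambda>\<alpha>. c * \<zeta> \<alpha>)"
proof -
  let ?L = "LT ord \<zeta>"
  have \<zeta>N: "\<zeta> \<in> N" and \<zeta>0: "\<zeta> \<noteq> (\<lambda>_. 0)" using valid_stepD[OF \<zeta>(1)] by auto
  have \<zeta>'N: "\<zeta>' \<in> N" and \<zeta>'0: "\<zeta>' \<noteq> (\<lambda>_. 0)" using valid_stepD[OF \<zeta>'(1)] by auto
  have LL: "LT ord \<zeta>' = ?L" by (rule valid_step_LT_unique[OF \<zeta>(1) \<zeta>'(1)])
  define c where "c = \<zeta>' ?L / \<zeta> ?L"
  define \<delta> where "\<delta> = (\<lambda>\<alpha>. \<zeta>' \<alpha> - c * \<zeta> \<alpha>)"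
  have \<delta>N: "\<delta> \<in> N" unfolding \<delta>_def by (rule submodule_diff_scale[OF submodule_N \<zeta>'N \<zeta>N])
  have "\<delta> = (\<lambda>_. 0)"
  proof (rule ccontr)
    assume \<delta>0: "\<delta> \<noteq> (\<lambda>_. 0)"
    have "ord (LT ord \<delta>) ?L"
      using LT_cancel_less[OF is_E_N[OF \<zeta>'N] is_E_N[OF \<zeta>N] \<zeta>'0 \<zeta>0 LL refl] \<delta>0
      unfolding \<delta>_def c_def by blast
    moreover have "\<delta> (LT ord \<delta>) \<noteq> 0" by (rule coeff_LT_nonzero[OF is_E_N[OF \<delta>N] \<delta>0])
    then have "\<zeta>' (LT ord \<delta>) \<noteq> 0 \<or> \<zeta> (LT ord \<delta>) \<noteq> 0" unfolding \<delta>_def by auto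
    then have "LT ord \<delta> \<notin> LTs ord M" using \<zeta>(2) \<zeta>'(2) unfolding reduced_def by blast
    then have "le_ord ord ?L (LT ord \<delta>)" by (rule valid_step_LT_le[OF \<zeta>(1) \<delta>N \<delta>0])
    ultimately show False using le_ord_iff_not_less by blast
  qed
  then have "\<zeta>' = (\<lambda>\<alpha>. c * \<zeta> \<alpha>)" unfolding \<delta>_def by (simp add: fun_eq_iff)
  moreover have "c \<noteq> 0"
    using coeff_LT_nonzero[OF is_E_N[OF \<zeta>'N] \<zeta>'0] coeff_LT_nonzero[OF is_E_N[OF \<zeta>N] \<zeta>0] LL
    unfolding c_def by simp
  ultimately show ?thesis by blast
qed

end

section \<open>Runs of the procedure\<close>

lemma sum_sub_cyclic_zero: "sum_sub M (cyclic (\<lambda>_. 0)) = M"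
  unfolding sum_sub_def cyclic_def smult_E_def by simp

lemma subset_sum_sub_cyclic: "M \<subseteq> sum_sub M (cyclic \<xi>)"
proof
  fix a assume "a \<in> M"
  moreover have "smult_E (\<lambda>_. 0) \<xi> \<in> cyclic \<xi>" unfolding cyclic_def by blast
  ultimately show "a \<in> sum_sub M (cyclic \<xi>)"
    unfolding sum_sub_def smult_E_zero by force
qed

lemma mono_Nseq: "mono (Nseq N \<xi>)"
  unfolding mono_iff_le_Suc by (simp add: subset_sum_sub_cyclic)

context lt_filtration
begin

lemma lt_stepI: "submodule M \<Longrightarrow> M \<subseteq> N \<Longrightarrow> lt_step ord N M"
  unfolding lt_step_def lt_step_axioms_def using lt_filtration_axioms by blast

lemma lt_step_T1: "lt_step ord N (T1 N)"
  by (rule lt_stepI[OF submodule_T1[OF submodule_N] T1_subset[OF submodule_N]])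

lemma lt_step_sum_sub_cyclic:
  assumes "lt_step ord N M" "valid_step ord N M \<xi>"
  shows "lt_step ord N (sum_sub M (cyclic \<xi>))"
proof -
  interpret lt_step ord N M by (fact assms(1))
  show ?thesis
    unfolding sum_sub_cyclic_valid_step[OF assms(2)]
    by (rule lt_stepI[OF submodule_line_ext_valid_step[OF assms(2)] line_ext_valid_step_subset[OF assms(2)]])
qed

lemma valid_run_lt_step:
  assumes run: "valid_run ord N \<xi>" and before: "\<And>j. j < i \<Longrightarrow> Nseq N \<xi> j \<noteq> N"
  shows "lt_step ord N (Nseq N \<xi> i)"
  using before
proof (induction i)
  case 0
  show ?case using lt_step_T1 by simp
next
  case (Suc i)
  have "valid_step ord N (Nseq N \<xi> i) (\<xi> (Suc i))" using run Suc.prems unfolding valid_run_def by blast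
  then show ?case using lt_step_sum_sub_cyclic Suc by simp
qed

lemma valid_run_terminates:
  assumes run: "valid_run ord N \<xi>"
  shows "\<exists>k. Nseq N \<xi> k = N \<and> (\<forall>j<k. Nseq N \<xi> j \<noteq> N)"
proof -
  have "\<exists>k. Nseq N \<xi> k = N"
  proof (rule ccontr)
    assume "\<nexists>k. Nseq N \<xi> k = N"
    then have step: "lt_step ord N (Nseq N \<xi> i)" "valid_step ord N (Nseq N \<xi> i) (\<xi> (Suc i))" for i
      using valid_run_lt_step[OF run] run unfolding valid_run_def by blast+
    have "Nseq N \<xi> i \<subset> Nseq N \<xi> (Suc i)" for i
      using lt_step.sum_sub_cyclic_valid_step[OF step] lt_step.psubset_line_ext_valid_step[OF step] by simp
    moreover have "submodule (Nseq N \<xi> i)" "Nseq N \<xi> i \<subseteq> N" for i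
      using lt_step.submodule_M[OF step(1)] lt_step.M_subset[OF step(1)] .
    ultimately show False
      using finite_length_not_strict_chain[of N "Nseq N \<xi>", OF finite_length_N] by blast
  qed
  then show ?thesis using exists_least_iff[of "\<lambda>k. Nseq N \<xi> k = N"] by blast
qed

text \<open>Once \<open>N\<close> is reached the choice \<open>0\<close> keeps the chain at \<open>N\<close>.\<close>
definition greedy_choice :: "(('v \<Rightarrow> nat) \<Rightarrow> 'k) set \<Rightarrow> ('v \<Rightarrow> nat) \<Rightarrow> 'k" where
  "greedy_choice M = (if M = N then (\<lambda>_. 0) else SOME \<zeta>. valid_step ord N M \<zeta>)"

primrec greedy_chain :: "nat \<Rightarrow> (('v \<Rightarrow> nat) \<Rightarrow> 'k) set" where
  "greedy_chain 0 = T1 N"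
| "greedy_chain (Suc i) = sum_sub (greedy_chain i) (cyclic (greedy_choice (greedy_chain i)))"

lemma valid_step_greedy_choice:
  assumes "lt_step ord N M" "M \<noteq> N"
  shows "valid_step ord N M (greedy_choice M)"
proof -
  have "\<exists>\<zeta>. valid_step ord N M \<zeta>" by (rule lt_step.ex_valid_step[OF assms])
  then show ?thesis unfolding greedy_choice_def using assms(2) by (simp add: someI_ex)
qed

lemma lt_step_greedy_chain: "lt_step ord N (greedy_chain i)"
proof (induction i)
  case (Suc i)
  show ?case
  proof (cases "greedy_chain i = N")
    case True
    then show ?thesis using Suc by (simp add: greedy_choice_def sum_sub_cyclic_zero)
  next
    case False
    then show ?thesis
      using lt_step_sum_sub_cyclic[OF Suc valid_step_greedy_choice[OF Suc False]] by simp
  qed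
qed (simp add: lt_step_T1)

lemma ex_valid_run: "\<exists>\<xi>. valid_run ord N \<xi>"
proof
  define \<xi> where "\<xi> i = (case i of 0 \<Rightarrow> (\<lambda>_. 0) | Suc j \<Rightarrow> greedy_choice (greedy_chain j))" for i
  have Nseq_\<xi>: "Nseq N \<xi> i = greedy_chain i" for i
    by (induction i) (simp_all add: \<xi>_def)
  show "valid_run ord N \<xi>"
    unfolding valid_run_def Nseq_\<xi>
    using valid_step_greedy_choice[OF lt_step_greedy_chain] by (simp add: \<xi>_def)
qed

context
  fixes \<xi> :: "nat \<Rightarrow> ('v \<Rightarrow> nat) \<Rightarrow> 'k" and k :: nat
  assumes run: "valid_run ord N \<xi>" and before: "\<And>j. j < k \<Longrightarrow> Nseq N \<xi> j \<noteq> N"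
begin

lemma run_lt_step: "i \<le> k \<Longrightarrow> lt_step ord N (Nseq N \<xi> i)"
  using valid_run_lt_step[OF run] before by simp

lemma run_valid_step: "i < k \<Longrightarrow> valid_step ord N (Nseq N \<xi> i) (\<xi> (Suc i))"
  using run before unfolding valid_run_def by blast

lemma run_submodule: "i \<le> k \<Longrightarrow> submodule (Nseq N \<xi> i)"
  using lt_step.submodule_M[OF run_lt_step] .

lemma
  assumes "i < k"
  shows run_Suc: "Nseq N \<xi> (Suc i) = line_ext (Nseq N \<xi> i) (\<xi> (Suc i))"
    and run_psubset: "Nseq N \<xi> i \<subset> Nseq N \<xi> (Suc i)"
    and run_quot_iso_K: "quot_iso_K (Nseq N \<xi> i) (Nseq N \<xi> (Suc i))"
proof -
  have step: "lt_step ord N (Nseq N \<xi> i)" "valid_step ord N (Nseq N \<xi> i) (\<xi> (Suc i))"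
    using run_lt_step run_valid_step assms by simp_all
  show "Nseq N \<xi> (Suc i) = line_ext (Nseq N \<xi> i) (\<xi> (Suc i))"
    using lt_step.sum_sub_cyclic_valid_step[OF step] by simp
  then show "Nseq N \<xi> i \<subset> Nseq N \<xi> (Suc i)" "quot_iso_K (Nseq N \<xi> i) (Nseq N \<xi> (Suc i))"
    using lt_step.psubset_line_ext_valid_step[OF step] lt_step.quot_iso_K_line_ext_valid_step[OF step]
    by simp_all
qed

lemma run_quot_iso_K_pred:
  assumes "i \<in> {1..k}"
  shows "quot_iso_K (Nseq N \<xi> (i - 1)) (Nseq N \<xi> i)"
proof -
  have "i - 1 < k" "Suc (i - 1) = i" using assms by auto
  then show ?thesis using run_quot_iso_K[of "i - 1"] by simp
qed

lemma run_reduced_choice: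
  assumes "i \<in> {1..k}"
  shows "\<exists>\<zeta>. valid_step ord N (Nseq N \<xi> (i - 1)) \<zeta> \<and> reduced ord (Nseq N \<xi> (i - 1)) \<zeta>"
    and "valid_step ord N (Nseq N \<xi> (i - 1)) \<zeta> \<Longrightarrow> reduced ord (Nseq N \<xi> (i - 1)) \<zeta>
      \<Longrightarrow> valid_step ord N (Nseq N \<xi> (i - 1)) \<zeta>' \<Longrightarrow> reduced ord (Nseq N \<xi> (i - 1)) \<zeta>'
      \<Longrightarrow> \<exists>c. c \<noteq> 0 \<and> \<zeta>' = (\<lambda>\<alpha>. c * \<zeta> \<alpha>)"
proof -
  have "i - 1 < k" using assms by auto
  then show "\<exists>\<zeta>. valid_step ord N (Nseq N \<xi> (i - 1)) \<zeta> \<and> reduced ord (Nseq N \<xi> (i - 1)) \<zeta>"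
    using lt_step.ex_reduced_valid_step[OF run_lt_step run_valid_step] by simp
  show "\<exists>c. c \<noteq> 0 \<and> \<zeta>' = (\<lambda>\<alpha>. c * \<zeta> \<alpha>)"
    if "valid_step ord N (Nseq N \<xi> (i - 1)) \<zeta>" "reduced ord (Nseq N \<xi> (i - 1)) \<zeta>"
      "valid_step ord N (Nseq N \<xi> (i - 1)) \<zeta>'" "reduced ord (Nseq N \<xi> (i - 1)) \<zeta>'"
    using lt_step.reduced_valid_step_unique[OF run_lt_step that] \<open>i - 1 < k\<close> by simp
qed

text \<open>\<open>\<xi> i\<close> already lies in \<open>N\<^sub>j\<^sub>-\<^sub>1\<close>, whose leading terms \<open>\<xi> j\<close> avoids.\<close>
lemma run_LT_less:
  assumes "1 \<le> i" "i < j" "j \<le> k"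
  shows "ord (LT ord (\<xi> i)) (LT ord (\<xi> j))"
proof -
  obtain i0 j0 where ij: "i = Suc i0" "j = Suc j0"
    using assms by (cases i; cases j) auto
  have vi: "valid_step ord N (Nseq N \<xi> i0) (\<xi> i)" and vj: "valid_step ord N (Nseq N \<xi> j0) (\<xi> j)"
    using run_valid_step assms ij by auto
  have "\<xi> i \<in> Nseq N \<xi> i"
    using run_Suc[of i0] mem_line_ext_self[OF run_submodule[of i0]] ij assms by simp
  moreover have "Nseq N \<xi> i \<subseteq> Nseq N \<xi> j0" using mono_Nseq[THEN monoD, of i j0] ij assms by simp
  ultimately have "\<xi> i \<in> Nseq N \<xi> j0" by blast
  then have "LT ord (\<xi> i) \<in> LTs ord (Nseq N \<xi> j0)" using LTs_memI valid_stepD(2)[OF vi] by blast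
  then have "LT ord (\<xi> i) \<noteq> LT ord (\<xi> j)" using valid_stepD(3)[OF vj] by auto
  moreover have "LT ord (\<xi> j) \<notin> LTs ord (Nseq N \<xi> i0)"
    using valid_stepD(3)[OF vj] LTs_mono[OF mono_Nseq[THEN monoD, of i0 j0]] assms ij by auto
  then have "le_ord ord (LT ord (\<xi> i)) (LT ord (\<xi> j))"
    using valid_step_LT_le[OF vi valid_stepD(1,2)[OF vj]] by blast
  ultimately show ?thesis unfolding le_ord_def by blast
qed

lemma run_unique: "valid_run ord N \<xi>' \<Longrightarrow> i \<le> k \<Longrightarrow> Nseq N \<xi>' i = Nseq N \<xi> i"
proof (induction i)
  case (Suc i)
  then have IH: "Nseq N \<xi>' i = Nseq N \<xi> i" and "i < k" by auto
  then have v': "valid_step ord N (Nseq N \<xi> i) (\<xi>' (Suc i))"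
    using Suc.prems(1) before unfolding valid_run_def by metis
  interpret lt_step ord N "Nseq N \<xi> i" using run_lt_step \<open>i < k\<close> by simp
  show ?case
    using IH sum_sub_cyclic_valid_step[OF v'] sum_sub_cyclic_valid_step[OF run_valid_step[OF \<open>i < k\<close>]]
      line_ext_valid_step_unique[OF run_valid_step[OF \<open>i < k\<close>] v'] by simp
qed simp

end

end

theorem theorem3p9:
  fixes ord :: "('v::finite \<Rightarrow> nat) \<Rightarrow> ('v \<Rightarrow> nat) \<Rightarrow> bool"
    and N :: "(('v \<Rightarrow> nat) \<Rightarrow> 'k::field) set"
  assumes "term_order ord" and "submodule N" and "finite_length N"
  shows "(\<exists>\<xi>. valid_run ord N \<xi>) \<and>
    (\<forall>\<xi>. valid_run ord N \<xi> \<longrightarrow>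
      (\<exists>k. Nseq N \<xi> 0 = T1 N \<and> Nseq N \<xi> k = N
        \<and> (\<forall>i\<le>k. submodule (Nseq N \<xi> i))
        \<and> (\<forall>i<k. Nseq N \<xi> i \<subset> Nseq N \<xi> (Suc i))
        \<and> (\<forall>i\<in>{1..k}. quot_iso_K (Nseq N \<xi> (i - 1)) (Nseq N \<xi> i))
        \<and> (\<forall>i j. 1 \<le> i \<and> i < j \<and> j \<le> k \<longrightarrow> ord (LT ord (\<xi> i)) (LT ord (\<xi> j)))
        \<and> (\<forall>\<xi>'. valid_run ord N \<xi>' \<longrightarrow> (\<forall>i\<le>k. Nseq N \<xi>' i = Nseq N \<xi> i))
        \<and> (\<forall>i\<in>{1..k}.
             (\<exists>\<zeta>. valid_step ord N (Nseq N \<xi> (i - 1)) \<zeta>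
                  \<and> (\<forall>\<alpha>. \<zeta> \<alpha> \<noteq> 0 \<longrightarrow> \<alpha> \<notin> LTs ord (Nseq N \<xi> (i - 1))))
           \<and> (\<forall>\<zeta> \<zeta>'. valid_step ord N (Nseq N \<xi> (i - 1)) \<zeta>
                  \<and> (\<forall>\<alpha>. \<zeta> \<alpha> \<noteq> 0 \<longrightarrow> \<alpha> \<notin> LTs ord (Nseq N \<xi> (i - 1)))
                  \<and> valid_step ord N (Nseq N \<xi> (i - 1)) \<zeta>'
                  \<and> (\<forall>\<alpha>. \<zeta>' \<alpha> \<noteq> 0 \<longrightarrow> \<alpha> \<notin> LTs ord (Nseq N \<xi> (i - 1)))
                  \<longrightarrow> (\<exists>c::'k. c \<noteq> 0 \<and> \<zeta>' = (\<lambda>\<alpha>. c * \<zeta> \<alpha>))))))"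
proof -
  interpret lt_filtration ord N
    using assms by unfold_locales
  show ?thesis (is "_ \<and> (\<forall>\<xi>. _ \<longrightarrow> (\<exists>k. ?chain \<xi> k))")
  proof (intro conjI allI impI ex_valid_run)
    fix \<xi> assume run: "valid_run ord N \<xi>"
    obtain k where "Nseq N \<xi> k = N" and before: "\<And>j. j < k \<Longrightarrow> Nseq N \<xi> j \<noteq> N"
      using valid_run_terminates[OF run] by blast
    note chain_facts = \<open>Nseq N \<xi> k = N\<close> run_submodule[OF run before] run_psubset[OF run before]
      run_quot_iso_K_pred[OF run before] run_LT_less[OF run before] run_unique[OF run before]
      run_reduced_choice[OF run before, unfolded reduced_def]
    show "\<exists>k. ?chain \<xi> k"
      by (intro exI[of _ k] conjI allI impI ballI) (use chain_facts in auto)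
  qed
qed

end
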